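(* Let $(F,\cdot)$ be a scalar group and let $\boxplus$ be an operation such that $(F,\boxplus,\cdot)$ is a left near-field. Then $0$ is the identity element of $(F,\boxplus)$. For every $\alpha\in F$, the additive inverse of $\alpha$ with respect to $\boxplus$ is either $-\alpha$ or $\alpha$, and if it is $\alpha$ (rather than $-\alpha$) then $1\boxplus1=0$. Moreover, $\alpha\cdot(-1)=(-1)\cdot\alpha$ for all $\alpha\in F$.
   Context: A scalar group is a tuple $(F,\cdot,1,0,-1)$ where $(F,\cdot,1)$ is a monoid, $0\ne1$, $0\alpha=\alpha0=0$, $\{1,-1\}$ is exactly the solution set of $x^2=1$, and $(F\setminus\{0\},\cdot)$ is a group; $-\alpha:=(-1)\cdot\alpha$. A left near-field $(F,\boxplus,\cdot)$: $(F,\boxplus)$ a group, $(F\setminus\{0'\},\cdot)$ a group where $0'$ is the $\boxplus$-identity, $0'\cdot\alpha=0'$, and $\gamma(\alpha\boxplus\beta)=\gamma\alpha\boxplus\gamma\beta$. *)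

theory Defs
  imports Main
begin

text \<open>The set F is modelled as the whole type 'a. A scalar group
  (F, mult, one, zero, neg) where neg stands for -1.\<close>

definition scalar_group :: "('a \<Rightarrow> 'a \<Rightarrow> 'a) \<Rightarrow> 'a \<Rightarrow> 'a \<Rightarrow> 'a \<Rightarrow> bool" where
  "scalar_group mult one zero neg \<longleftrightarrow>
     (\<forall>a b c. mult (mult a b) c = mult a (mult b c)) \<and>
     (\<forall>a. mult one a = a \<and> mult a one = a) \<and>
     zero \<noteq> one \<and>
     (\<forall>a. mult zero a = zero \<and> mult a zero = zero) \<and>
     (\<forall>x. mult x x = one \<longleftrightarrow> x = one \<or> x = neg) \<and>
     (\<forall>a b. a \<noteq> zero \<longrightarrow> b \<noteq> zero \<longrightarrow> mult a b \<noteq> zero) \<and>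
     (\<forall>a. a \<noteq> zero \<longrightarrow> (\<exists>b. b \<noteq> zero \<and> mult a b = one \<and> mult b a = one))"

definition left_near_field :: "('a \<Rightarrow> 'a \<Rightarrow> 'a) \<Rightarrow> ('a \<Rightarrow> 'a \<Rightarrow> 'a) \<Rightarrow> bool" where
  "left_near_field add mult \<longleftrightarrow>
     (\<exists>z. (\<forall>a b c. add (add a b) c = add a (add b c)) \<and>
          (\<forall>a. add z a = a \<and> add a z = a) \<and>
          (\<forall>a. \<exists>b. add a b = z \<and> add b a = z) \<and>
          (\<forall>a b. a \<noteq> z \<longrightarrow> b \<noteq> z \<longrightarrow> mult a b \<noteq> z) \<and>
          (\<forall>a b c. a \<noteq> z \<longrightarrow> b \<noteq> z \<longrightarrow> c \<noteq> z \<longrightarrow> mult (mult a b) c = mult a (mult b c)) \<and>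
          (\<exists>e. e \<noteq> z \<and> (\<forall>a. a \<noteq> z \<longrightarrow> mult e a = a \<and> mult a e = a) \<and>
               (\<forall>a. a \<noteq> z \<longrightarrow> (\<exists>b. b \<noteq> z \<and> mult a b = e \<and> mult b a = e))) \<and>
          (\<forall>a. mult z a = z) \<and>
          (\<forall>a b c. mult c (add a b) = add (mult c a) (mult c b)))"

definition is_add_inverse :: "('a \<Rightarrow> 'a \<Rightarrow> 'a) \<Rightarrow> 'a \<Rightarrow> 'a \<Rightarrow> 'a \<Rightarrow> bool" where
  "is_add_inverse add z a b \<longleftrightarrow> add a b = z \<and> add b a = z"

end

theory Submission
  imports Defs
begin

text \<open>Write \<open>\<ominus>1\<close> for the \<open>\<boxplus>\<close>-inverse of \<open>1\<close>. Left distributivity gives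
  \<open>\<alpha> \<boxplus> \<alpha>\<cdot>(\<ominus>1) = \<alpha>\<cdot>(1 \<boxplus> \<ominus>1) = 0\<close>, so \<open>\<alpha>\<cdot>(\<ominus>1)\<close> is the inverse of every \<open>\<alpha>\<close>.
  Applied to \<open>\<alpha> = \<ominus>1\<close> this shows \<open>(\<ominus>1)\<^sup>2 = 1\<close>, hence \<open>\<ominus>1\<close> is \<open>1\<close> or \<open>-1\<close>.
  Centrality of \<open>-1\<close> holds in any scalar group: the conjugate \<open>\<alpha>(-1)\<alpha>\<^sup>-\<^sup>1\<close> is an
  involution, hence \<open>1\<close> or \<open>-1\<close>, and it can be \<open>1\<close> only if \<open>-1 = 1\<close>.\<close>

lemma scalar_group_neg_commute:
  assumes "scalar_group mult one zero neg"
  shows "mult a neg = mult neg a"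
proof (cases "a = zero")
  case True
  then show ?thesis using assms unfolding scalar_group_def by simp
next
  case False
  have assoc: "\<And>a b c. mult (mult a b) c = mult a (mult b c)"
    and one_left: "\<And>a. mult one a = a" and one_right: "\<And>a. mult a one = a"
    and involution: "\<And>x. mult x x = one \<longleftrightarrow> x = one \<or> x = neg"
    using assms unfolding scalar_group_def by auto
  obtain a' where a': "mult a a' = one" "mult a' a = one"
    using False assms unfolding scalar_group_def by blast
  define c where "c = mult (mult a neg) a'"
  have "mult c c = mult a (mult neg (mult (mult a' a) (mult neg a')))"
    unfolding c_def by (simp add: assoc)
  also have "\<dots> = mult a (mult (mult neg neg) a')"
    by (simp add: a' one_left assoc)
  finally have "mult c c = mult a (mult (mult neg neg) a')" .
  then have "c = one \<or> c = neg"
    using involution[of c] involution[of neg] a' one_left by simp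
  moreover have c_a: "mult c a = mult a neg"
    unfolding c_def by (simp add: assoc a' one_right)
  moreover have "c = one \<Longrightarrow> neg = one"
    using c_a a'(2) by (metis assoc one_left)
  ultimately show ?thesis
    using one_left one_right by metis
qed

lemma left_near_field_additive_group:
  assumes "left_near_field add mult" and absorbing: "\<And>a. mult a w = w"
  shows "add (add a b) c = add a (add b c)"
    and "add w a = a" and "add a w = a"
    and "\<exists>b. is_add_inverse add w a b"
proof -
  obtain z where assoc: "\<forall>a b c. add (add a b) c = add a (add b c)"
    and ident: "\<forall>a. add z a = a \<and> add a z = a"
    and inverse: "\<forall>a. \<exists>b. add a b = z \<and> add b a = z"
    and z_left: "\<forall>a. mult z a = z"
    using assms(1) unfolding left_near_field_def by metis
  have "z = w" using z_left absorbing[of z] by simp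
  then show "add (add a b) c = add a (add b c)"
    and "add w a = a" and "add a w = a"
    and "\<exists>b. is_add_inverse add w a b"
    using assoc ident inverse unfolding is_add_inverse_def by simp_all
qed

lemma add_inverse_unique:
  assumes assoc: "\<And>a b c. add (add a b) c = add a (add b c)"
    and ident: "\<And>a. add z a = a" "\<And>a. add a z = a"
    and "is_add_inverse add z a x" and "is_add_inverse add z a y"
  shows "x = y"
proof -
  have "x = add x (add a y)" using assms(5) ident unfolding is_add_inverse_def by simp
  also have "\<dots> = add (add x a) y" by (simp add: assoc)
  also have "\<dots> = y" using assms(4) ident unfolding is_add_inverse_def by simp
  finally show ?thesis .
qed

lemma left_near_field_inverse_by_scaling:
  assumes "left_near_field add mult"
    and "\<And>a. mult a one = a" and "\<And>a. mult a zero = zero"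
    and "is_add_inverse add zero one b"
  shows "is_add_inverse add zero a (mult a b)"
proof -
  have distrib: "\<And>a b c. mult c (add a b) = add (mult c a) (mult c b)"
    using assms(1) unfolding left_near_field_def by metis
  show ?thesis
    using distrib[where c = a and a = one and b = b] distrib[where c = a and a = b and b = one] assms(2-4)
    unfolding is_add_inverse_def by simp
qed

theorem mainTheorem13:
  fixes mult add :: "'a \<Rightarrow> 'a \<Rightarrow> 'a" and one zero neg :: 'a
  assumes "scalar_group mult one zero neg"
    and "left_near_field add mult"
  shows "(\<forall>a. add zero a = a \<and> add a zero = a) \<and>
         (\<forall>a. is_add_inverse add zero a (mult neg a) \<or> is_add_inverse add zero a a) \<and>
         (\<forall>a. is_add_inverse add zero a a \<and> a \<noteq> mult neg a \<longrightarrow> add one one = zero) \<and>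
         (\<forall>a. mult a neg = mult neg a)"
proof -
  have one_right: "\<And>a. mult a one = a" and absorbing: "\<And>a. mult a zero = zero"
    and involution: "\<And>x. mult x x = one \<longleftrightarrow> x = one \<or> x = neg"
    using assms(1) unfolding scalar_group_def by auto
  note additive = left_near_field_additive_group[OF assms(2) absorbing]
  note unique = add_inverse_unique[of add, OF additive(1-3)]
  note neg_commute = scalar_group_neg_commute[OF assms(1)]
  obtain b where b: "is_add_inverse add zero one b" using additive(4) by blast
  note scaled = left_near_field_inverse_by_scaling[OF assms(2) one_right absorbing b]
  have "mult b b = one"
    using unique[OF scaled[of b]] b unfolding is_add_inverse_def by metis
  then have b_cases: "b = one \<or> b = neg" using involution by blast
  have "is_add_inverse add zero a (mult neg a) \<or> is_add_inverse add zero a a" for a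
    using b_cases scaled[of a] one_right neg_commute by metis
  moreover have "add one one = zero"
    if "is_add_inverse add zero a a" and "a \<noteq> mult neg a" for a
    using b_cases b unique[OF that(1) scaled[of a]] that(2) neg_commute
    unfolding is_add_inverse_def by metis
  ultimately show ?thesis using additive(2,3) neg_commute by blast
qed

end
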